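(* For all $n\ge1$, all $\beta\ge n$, and every symmetric positive semidefinite $n\times n$ matrix $M$, $$\beta+\operatorname{tr}(M-I)-\beta(\det M)^{1/\beta}\ \ge\ \frac{3}{64\beta}\Big(1-\frac n\beta\Big)^2\mathcal F\big(\|M-I\|_{\mathrm{HS}}\big),$$ where $\mathcal F(t)=t-\log(1+t)$ and $\|\cdot\|_{\mathrm{HS}}$ is the Hilbert–Schmidt norm.
   Context: The left-hand side is $\mathcal G_\kappa(M)=\frac1\kappa(\det M)^{-\kappa}-\frac1\kappa+\operatorname{tr}(M-I)$ with $\kappa=-1/\beta$. *)

theory Defs
  imports "HOL-Analysis.Analysis"
begin

definition psd_matrix :: "real^'n^'n \<Rightarrow> bool" where
  "psd_matrix M \<longleftrightarrow> transpose M = M \<and> (\<forall>x::real^'n. 0 \<le> x \<bullet> (M *v x))"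

definition hs_norm :: "real^'n^'m \<Rightarrow> real" where
  "hs_norm A = sqrt (\<Sum>i\<in>UNIV. \<Sum>j\<in>UNIV. (A $ i $ j)^2)"

definition F_fun :: "real \<Rightarrow> real" where
  "F_fun t = t - ln (1 + t)"

end

theory Submission
  imports Defs
begin

text \<open>Diagonalising \<open>M = P diag(\<lambda>) P\<^sup>T\<close> with \<open>P\<close> orthogonal reduces the claim to its eigenvalues
  \<open>\<lambda>\<^sub>i \<ge> 0\<close>. The left-hand side is then \<open>\<beta>(A - G)\<close>, where \<open>A\<close> and \<open>G\<close> are the arithmetic and
  geometric means of the \<open>\<lambda>\<^sub>i\<close> padded with \<open>\<beta> - n\<close> ones, and \<open>F(\<parallel>\<lambda> - 1\<parallel>)\<close> is bounded by the
  coordinatewise sum of \<open>x\<^sup>2/(1+|x|)\<close>. If \<open>G \<le> A/2\<close> this sum is at most \<open>\<Sum>\<lambda>\<^sub>i + n\<close>, which is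
  controlled by \<open>\<beta>A\<close>. Otherwise \<open>D = ln(A/G)\<close> is at most 1, so \<open>A - G \<ge> AD/2\<close>; splitting \<open>\<beta>D\<close>
  into the terms \<open>r - 1 - ln r\<close> at \<open>r = \<lambda>\<^sub>i/A\<close> and \<open>r = 1/A\<close> shows it dominates
  \<open>\<Sum>(\<surd>\<lambda>\<^sub>i - 1)\<^sup>2\<close>, which in turn dominates the sum of \<open>x\<^sup>2/(1+|x|)\<close> at \<open>x = \<lambda>\<^sub>i - 1\<close>.\<close>

lemma quadratic_nonpos_imp_linear_coeff_zero:
  fixes a b :: real
  assumes "\<And>t. a * t + b * t\<^sup>2 \<le> 0"
  shows "a = 0"
proof -
  define B where "B = \<bar>b\<bar> + 1"
  have B: "0 < B" unfolding B_def by simp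
  have "a * (a / (2*B)) + b * (a / (2*B))\<^sup>2 \<le> 0" using assms by blast
  hence "4 * B\<^sup>2 * (a * (a / (2*B)) + b * (a / (2*B))\<^sup>2) \<le> 0"
    by (simp add: mult_nonneg_nonpos)
  also have "4 * B\<^sup>2 * (a * (a / (2*B)) + b * (a / (2*B))\<^sup>2) = a\<^sup>2 * (2*B + b)"
    using B by (simp add: field_simps power2_eq_square)
  finally have "a\<^sup>2 * (2*B + b) \<le> 0" .
  moreover have "0 < 2*B + b" unfolding B_def by (cases "0 \<le> b") auto
  ultimately have "a\<^sup>2 \<le> 0" by (simp add: mult_le_0_iff)
  thus ?thesis by simp
qed

lemma symmetric_matrix_inner_commute:
  fixes M :: "real^'n^'n"
  assumes "transpose M = M"
  shows "x \<bullet> (M *v y) = (M *v x) \<bullet> y"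
  by (metis assms dot_lmul_matrix transpose_matrix_vector)

lemma quadratic_form_attains_max_on_subspace_sphere:
  fixes M :: "real^'n^'n"
  assumes S: "subspace S" and x0: "x0 \<in> S" "x0 \<noteq> 0"
  obtains v where "v \<in> S" "norm v = 1" "\<And>x. x \<in> S \<Longrightarrow> x \<bullet> (M *v x) \<le> (v \<bullet> (M *v v)) * (x \<bullet> x)"
proof -
  let ?q = "\<lambda>x. x \<bullet> (M *v x)"
  define K where "K = S \<inter> sphere 0 1"
  have "compact K" unfolding K_def by (simp add: S closed_Int_compact closed_subspace)
  moreover have "x0 /\<^sub>R norm x0 \<in> K" unfolding K_def using x0 S by (simp add: subspace_mul)
  moreover have "continuous_on K ?q" by (intro continuous_intros)
  ultimately obtain v where vK: "v \<in> K" and vmax: "\<And>y. y \<in> K \<Longrightarrow> ?q y \<le> ?q v"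
    using continuous_attains_sup[of K ?q] by blast
  show ?thesis
  proof
    show "v \<in> S" "norm v = 1" using vK unfolding K_def by auto
    fix x assume xS: "x \<in> S"
    show "?q x \<le> ?q v * (x \<bullet> x)"
    proof (cases "x = 0")
      case False
      have "x /\<^sub>R norm x \<in> K" unfolding K_def using xS False S by (simp add: subspace_mul)
      hence "?q (x /\<^sub>R norm x) \<le> ?q v" by (rule vmax)
      moreover have "?q (x /\<^sub>R norm x) = ?q x / (norm x)\<^sup>2"
        by (simp add: matrix_vector_mult_scaleR power2_eq_square field_simps)
      ultimately have "?q x / (norm x)\<^sup>2 \<le> ?q v" by simp
      thus ?thesis using False by (simp add: divide_le_eq power2_norm_eq_inner)
    qed simp
  qed
qed

text \<open>Lagrange's condition: along \<open>v + t w\<close> the Rayleigh-quotient inequality is a quadratic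
  polynomial in \<open>t\<close> that is nonpositive and vanishes at \<open>t = 0\<close>, so its linear coefficient vanishes.\<close>
lemma quadratic_form_maximizer_is_eigenvector:
  fixes M :: "real^'n^'n"
  assumes sym: "transpose M = M" and S: "subspace S" and inv: "\<And>x. x \<in> S \<Longrightarrow> M *v x \<in> S"
    and vS: "v \<in> S" and nv: "norm v = 1"
    and max: "\<And>x. x \<in> S \<Longrightarrow> x \<bullet> (M *v x) \<le> (v \<bullet> (M *v v)) * (x \<bullet> x)"
  shows "M *v v = (v \<bullet> (M *v v)) *\<^sub>R v"
proof -
  define l where "l = v \<bullet> (M *v v)"
  have vv: "v \<bullet> v = 1" using nv by (simp add: power2_norm_eq_inner[symmetric])
  have orth: "w \<bullet> (M *v v - l *\<^sub>R v) = 0" if wS: "w \<in> S" for w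
  proof -
    have "2 * (w \<bullet> (M *v v) - l * (w \<bullet> v)) * t + (w \<bullet> (M *v w) - l * (w \<bullet> w)) * t\<^sup>2 \<le> 0" for t
    proof -
      have "v + t *\<^sub>R w \<in> S" using S vS wS by (simp add: subspace_add subspace_mul)
      hence "(v + t *\<^sub>R w) \<bullet> (M *v (v + t *\<^sub>R w)) \<le> l * ((v + t *\<^sub>R w) \<bullet> (v + t *\<^sub>R w))"
        using max unfolding l_def by blast
      moreover have "v \<bullet> (M *v w) = w \<bullet> (M *v v)"
        using symmetric_matrix_inner_commute[OF sym, of v w] by (simp add: inner_commute)
      ultimately show ?thesis
        using vv unfolding l_def
        by (simp add: matrix_vector_right_distrib matrix_vector_mult_scaleR inner_add_left
            inner_add_right inner_commute[of w v] power2_eq_square algebra_simps)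
    qed
    hence "2 * (w \<bullet> (M *v v) - l * (w \<bullet> v)) = 0" by (rule quadratic_nonpos_imp_linear_coeff_zero)
    thus ?thesis by (simp add: inner_diff_right)
  qed
  have "M *v v - l *\<^sub>R v \<in> S" using S vS inv by (simp add: subspace_diff subspace_mul)
  from orth[OF this] show ?thesis unfolding l_def by simp
qed

lemma symmetric_matrix_unit_eigenvector_in_invariant_subspace:
  fixes M :: "real^'n^'n"
  assumes sym: "transpose M = M" and S: "subspace S" and inv: "\<And>x. x \<in> S \<Longrightarrow> M *v x \<in> S"
    and x0: "x0 \<in> S" "x0 \<noteq> 0"
  obtains v l where "v \<in> S" "norm v = 1" "M *v v = l *\<^sub>R v"
  using quadratic_form_attains_max_on_subspace_sphere[OF S x0, of M]
    quadratic_form_maximizer_is_eigenvector[OF sym S inv] by metis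

lemma symmetric_matrix_orthonormal_eigenvectors:
  fixes M :: "real^'n^'n"
  assumes sym: "transpose M = M" and "k \<le> CARD('n)"
  shows "\<exists>B. finite B \<and> card B = k \<and> pairwise orthogonal B
             \<and> (\<forall>b\<in>B. norm b = 1 \<and> (\<exists>l. M *v b = l *\<^sub>R b))"
  using assms(2)
proof (induction k)
  case 0
  show ?case by (intro exI[of _ "{}"]) auto
next
  case (Suc k)
  then obtain B where fB: "finite B" and cB: "card B = k" and oB: "pairwise orthogonal B"
    and eB: "\<forall>b\<in>B. norm b = 1 \<and> (\<exists>l. M *v b = l *\<^sub>R b)"
    by auto
  have "independent B" using oB eB by (intro pairwise_orthogonal_independent) force+
  hence "dim (span B) < dim (UNIV :: (real^'n) set)"
    using Suc.prems cB by (simp add: dim_eq_card_independent)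
  hence "span B \<noteq> UNIV" by (metis less_irrefl)
  hence "span B \<subset> span UNIV" by auto
  then obtain x where x0: "x \<noteq> 0" and xB: "\<And>y. y \<in> span B \<Longrightarrow> orthogonal x y"
    using orthogonal_to_subspace_exists_gen[of B UNIV] by metis
  define S where "S = {y. \<forall>b\<in>B. orthogonal b y}"
  have S: "subspace S" unfolding S_def by (rule subspace_orthogonal_to_vectors)
  have "M *v y \<in> S" if "y \<in> S" for y
  proof -
    have "b \<bullet> (M *v y) = 0" if bB: "b \<in> B" for b
    proof -
      obtain l where "M *v b = l *\<^sub>R b" using eB bB by blast
      hence "b \<bullet> (M *v y) = l * (b \<bullet> y)"
        using symmetric_matrix_inner_commute[OF sym, of b y] by simp
      thus ?thesis using \<open>y \<in> S\<close> bB unfolding S_def orthogonal_def by simp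
    qed
    thus ?thesis unfolding S_def orthogonal_def by blast
  qed
  moreover have "x \<in> S" unfolding S_def using xB span_superset orthogonal_commute by blast
  ultimately obtain v l where vS: "v \<in> S" and nv: "norm v = 1" and ev: "M *v v = l *\<^sub>R v"
    using symmetric_matrix_unit_eigenvector_in_invariant_subspace[OF sym S] x0 by metis
  have "v \<notin> B" using vS nv unfolding S_def orthogonal_def by (auto simp: power2_norm_eq_inner[symmetric])
  show ?case
  proof (intro exI[of _ "insert v B"] conjI)
    show "finite (insert v B)" "card (insert v B) = Suc k" using fB cB \<open>v \<notin> B\<close> by simp_all
    show "pairwise orthogonal (insert v B)"
      using oB vS unfolding S_def pairwise_insert by (auto simp: orthogonal_commute)
    show "\<forall>b\<in>insert v B. norm b = 1 \<and> (\<exists>l. M *v b = l *\<^sub>R b)" using eB nv ev by blast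
  qed
qed

definition diag_mat :: "('n \<Rightarrow> 'a::zero) \<Rightarrow> 'a^'n^'n" where
  "diag_mat d = (\<chi> i j. if i = j then d i else 0)"

lemma symmetric_matrix_diagonalization:
  fixes M :: "real^'n^'n"
  assumes sym: "transpose M = M"
  obtains P d where "orthogonal_matrix P" "M = P ** diag_mat d ** transpose P"
proof -
  obtain B where fB: "finite B" and cB: "card B = CARD('n)" and oB: "pairwise orthogonal B"
    and eB: "\<forall>b\<in>B. norm b = 1 \<and> (\<exists>l. M *v b = l *\<^sub>R b)"
    using symmetric_matrix_orthonormal_eigenvectors[OF sym, of "CARD('n)"] by auto
  obtain f where f: "bij_betw f (UNIV :: 'n set) B"
    using finite_same_card_bij[of "UNIV :: 'n set" B] fB cB by auto
  hence fB': "f j \<in> B" and finj: "inj f" for j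
    by (auto simp: bij_betw_def)
  have "\<forall>j. \<exists>l. M *v f j = l *\<^sub>R f j" using eB fB' by blast
  then obtain d where ev: "\<And>j. M *v f j = d j *\<^sub>R f j" by metis
  define P :: "real^'n^'n" where "P = (\<chi> i j. f j $ i)"
  have col: "column j P = f j" for j by (simp add: P_def column_def)
  have oP: "orthogonal_matrix P"
    unfolding orthogonal_matrix_orthonormal_columns col
  proof (intro conjI allI impI)
    fix i j :: 'n
    show "norm (f i) = 1" using eB fB' by blast
    assume "i \<noteq> j"
    hence "f i \<noteq> f j" using finj by (auto simp: inj_def)
    thus "orthogonal (f i) (f j)" using oB fB' unfolding pairwise_def by blast
  qed
  have "(M ** P) $ k $ j = (P ** diag_mat d) $ k $ j" for k j
  proof -
    have "(M ** P) $ k $ j = (M *v f j) $ k"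
      by (simp add: P_def matrix_matrix_mult_def matrix_vector_mult_def)
    moreover have "(P ** diag_mat d) $ k $ j = d j * f j $ k"
      by (simp add: P_def diag_mat_def matrix_matrix_mult_def if_distrib if_distribR cong: if_cong)
    ultimately show ?thesis using ev by simp
  qed
  hence "M ** P = P ** diag_mat d" by (simp add: vec_eq_iff)
  hence "M ** (P ** transpose P) = P ** diag_mat d ** transpose P" by (simp add: matrix_mul_assoc)
  hence "M = P ** diag_mat d ** transpose P"
    using oP by (simp add: orthogonal_matrix_def)
  with oP show ?thesis using that by blast
qed

lemma det_diag_mat: "det (diag_mat d) = prod d UNIV"
  by (simp add: det_diagonal diag_mat_def)

lemma trace_diag_mat: "trace (diag_mat d) = sum d UNIV"
  by (simp add: trace_def diag_mat_def)

lemma hs_norm_diag_mat: "hs_norm (diag_mat d) = sqrt (\<Sum>i\<in>UNIV. (d i)\<^sup>2)"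
proof -
  have "(diag_mat d $ i $ j)\<^sup>2 = (if i = j then (d i)\<^sup>2 else 0)" for i j
    by (simp add: diag_mat_def)
  thus ?thesis by (simp add: hs_norm_def)
qed

lemma diag_mat_diff_mat_1: "diag_mat d - mat 1 = diag_mat (\<lambda>i. d i - 1 :: real)"
  by (simp add: vec_eq_iff diag_mat_def mat_def)

lemma diag_mat_mult_vector_nth: "(diag_mat d *v x) $ k = d k * x $ k"
  unfolding diag_mat_def matrix_vector_mult_def by (simp add: mult_delta_left)

lemma diag_mat_mult_axis: "diag_mat d *v axis i 1 = d i *\<^sub>R axis i (1::real)"
  by (simp add: vec_eq_iff diag_mat_mult_vector_nth axis_def)

lemma matrix_mul_diff_ldistrib: "(A::'a::ring_1^'n^'m) ** (B - C) = A ** B - A ** (C::'a^'k^'n)"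
  by (simp add: vec_eq_iff matrix_matrix_mult_def sum_subtractf algebra_simps)

lemma matrix_mul_diff_rdistrib: "((B::'a::ring_1^'n^'m) - C) ** (A::'a^'k^'n) = B ** A - C ** A"
  by (simp add: vec_eq_iff matrix_matrix_mult_def sum_subtractf algebra_simps)

lemma hs_norm_nonneg: "0 \<le> hs_norm A"
  by (simp add: hs_norm_def sum_nonneg)

lemma hs_norm_sq_eq_trace: "(hs_norm (A::real^'n^'m))\<^sup>2 = trace (transpose A ** A)"
proof -
  have "trace (transpose A ** A) = (\<Sum>j\<in>UNIV. \<Sum>i\<in>UNIV. (A$i$j)\<^sup>2)"
    by (simp add: trace_def matrix_matrix_mult_def transpose_def power2_eq_square)
  also have "\<dots> = (\<Sum>i\<in>UNIV. \<Sum>j\<in>UNIV. (A$i$j)\<^sup>2)" by (rule sum.swap)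
  finally show ?thesis unfolding hs_norm_def by (simp add: sum_nonneg)
qed

context
  fixes P :: "real^'n^'n"
  assumes orth: "orthogonal_matrix P"
begin

lemma orthogonal_matrix_transpose_mult: "transpose P ** P = mat 1"
  using orth by (simp add: orthogonal_matrix_def)

lemma det_orthogonal_conj: "det (P ** A ** transpose P) = det A"
proof -
  have "det (transpose P ** P) = 1" using orthogonal_matrix_transpose_mult by simp
  hence "det P * det P = 1" by (simp add: det_mul det_transpose)
  thus ?thesis by (simp add: det_mul det_transpose algebra_simps)
qed

lemma trace_orthogonal_conj: "trace (P ** A ** transpose P) = trace A"
proof -
  have "trace (P ** A ** transpose P) = trace (transpose P ** (P ** A))" by (rule trace_mul_sym)
  also have "\<dots> = trace A" using orthogonal_matrix_transpose_mult by (simp add: matrix_mul_assoc)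
  finally show ?thesis .
qed

lemma hs_norm_orthogonal_conj: "hs_norm (P ** A ** transpose P) = hs_norm A"
proof -
  have "transpose (P ** A ** transpose P) ** (P ** A ** transpose P)
        = P ** transpose A ** (transpose P ** P) ** A ** transpose P"
    by (simp add: matrix_transpose_mul matrix_mul_assoc)
  also have "\<dots> = P ** (transpose A ** A) ** transpose P"
    using orthogonal_matrix_transpose_mult by (simp add: matrix_mul_assoc)
  finally have "transpose (P ** A ** transpose P) ** (P ** A ** transpose P)
        = P ** (transpose A ** A) ** transpose P" .
  hence "(hs_norm (P ** A ** transpose P))\<^sup>2 = (hs_norm A)\<^sup>2"
    by (simp add: hs_norm_sq_eq_trace trace_orthogonal_conj)
  thus ?thesis by (rule power2_eq_imp_eq) (simp_all add: hs_norm_nonneg)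
qed

lemma orthogonal_conj_diff_mat_1: "P ** A ** transpose P - mat 1 = P ** (A - mat 1) ** transpose P"
  using orth by (simp add: matrix_mul_diff_ldistrib matrix_mul_diff_rdistrib orthogonal_matrix_def)

lemma psd_matrix_orthogonal_conj_diag_nonneg:
  assumes "psd_matrix (P ** diag_mat d ** transpose P)"
  shows "0 \<le> d i"
proof -
  define x where "x = P *v axis i 1"
  have "transpose P *v x = axis i 1"
    unfolding x_def
    by (simp only: matrix_vector_mul_assoc orthogonal_matrix_transpose_mult matrix_vector_mul_lid)
  have "x \<bullet> ((P ** diag_mat d ** transpose P) *v x) = x \<bullet> (P *v (diag_mat d *v (transpose P *v x)))"
    by (simp only: matrix_vector_mul_assoc matrix_mul_assoc)
  also have "\<dots> = (transpose P *v x) \<bullet> (diag_mat d *v (transpose P *v x))"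
    by (simp only: transpose_matrix_vector dot_lmul_matrix)
  also have "\<dots> = axis i 1 \<bullet> (diag_mat d *v axis i 1)"
    using \<open>transpose P *v x = axis i 1\<close> by simp
  also have "\<dots> = d i" by (simp add: diag_mat_mult_axis)
  finally show ?thesis using assms unfolding psd_matrix_def by (metis (no_types))
qed

end

lemma F_fun_le_sq_div:
  fixes t :: real assumes "0 \<le> t"
  shows "F_fun t \<le> t\<^sup>2 / (1 + t)"
proof -
  have "ln (1/(1+t)) \<le> 1/(1+t) - 1" using assms by (intro ln_le_minus_one) simp
  hence "t / (1+t) \<le> ln (1+t)" using assms by (simp add: ln_div field_simps)
  moreover have "t - t/(1+t) = t\<^sup>2/(1+t)" using assms by (simp add: field_simps power2_eq_square)
  ultimately show ?thesis unfolding F_fun_def by linarith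
qed

text \<open>Quadratic near 0 and linear at infinity, like F(|x|), but additive over coordinates.\<close>
definition quad_lin :: "real \<Rightarrow> real" where
  "quad_lin x = x\<^sup>2 / (1 + \<bar>x\<bar>)"

lemma quad_lin_nonneg: "0 \<le> quad_lin x"
  by (simp add: quad_lin_def)

lemma F_fun_norm_le_sum_quad_lin:
  fixes x :: "'i::finite \<Rightarrow> real"
  shows "F_fun (sqrt (\<Sum>i\<in>UNIV. (x i)\<^sup>2)) \<le> (\<Sum>i\<in>UNIV. quad_lin (x i))"
proof -
  define t where "t = sqrt (\<Sum>i\<in>UNIV. (x i)\<^sup>2)"
  have t0: "0 \<le> t" unfolding t_def by (simp add: sum_nonneg)
  have coord_le: "\<bar>x i\<bar> \<le> t" for i
  proof -
    have "(x i)\<^sup>2 \<le> (\<Sum>j\<in>UNIV. (x j)\<^sup>2)" by (rule member_le_sum) auto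
    hence "sqrt ((x i)\<^sup>2) \<le> t" unfolding t_def by (rule real_sqrt_le_mono)
    thus ?thesis by simp
  qed
  have "F_fun t \<le> t\<^sup>2 / (1 + t)" using F_fun_le_sq_div[OF t0] .
  also have "\<dots> = (\<Sum>i\<in>UNIV. (x i)\<^sup>2 / (1 + t))"
    unfolding t_def by (simp add: sum_nonneg sum_divide_distrib)
  also have "\<dots> \<le> (\<Sum>i\<in>UNIV. quad_lin (x i))"
    unfolding quad_lin_def using coord_le t0
    by (intro sum_mono divide_left_mono) (auto intro!: mult_pos_pos add_pos_nonneg)
  finally show ?thesis unfolding t_def .
qed

lemma quad_lin_le_add_one:
  fixes a :: real assumes "0 \<le> a"
  shows "quad_lin (a - 1) \<le> a + 1"
proof -
  have "\<bar>a-1\<bar>\<^sup>2 \<le> \<bar>a-1\<bar> * (1 + \<bar>a-1\<bar>)" by (simp add: power2_eq_square algebra_simps)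
  hence "quad_lin (a - 1) \<le> \<bar>a-1\<bar>" by (simp add: quad_lin_def divide_le_eq add_pos_nonneg)
  thus ?thesis using assms by linarith
qed

lemma quad_lin_le_sqrt_dist:
  fixes a :: real assumes "0 \<le> a"
  shows "quad_lin (a - 1) \<le> 4 * (sqrt a - 1)\<^sup>2"
proof -
  define r where "r = sqrt a"
  have r0: "0 \<le> r" and a_eq: "a = r\<^sup>2" using assms unfolding r_def by auto
  have "(r+1)\<^sup>2 \<le> 4 * (1 + \<bar>a-1\<bar>)"
  proof (cases "1 \<le> r")
    case True
    hence "\<bar>a-1\<bar> = r\<^sup>2 - 1" unfolding a_eq by (simp add: abs_of_nonneg one_le_power)
    moreover have "(r+1)\<^sup>2 \<le> (2*r)\<^sup>2" using True by (intro power_mono) auto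
    ultimately show ?thesis by (simp add: power2_eq_square)
  next
    case False
    hence "(r+1)\<^sup>2 \<le> 2\<^sup>2" using r0 by (intro power_mono) auto
    thus ?thesis using abs_ge_zero[of "a-1"] by (simp del: abs_ge_zero)
  qed
  hence "(r-1)\<^sup>2 * (r+1)\<^sup>2 \<le> 4 * (r-1)\<^sup>2 * (1 + \<bar>a-1\<bar>)"
    by (metis mult.assoc mult.left_commute mult_left_mono zero_le_power2)
  moreover have "\<bar>a-1\<bar>\<^sup>2 = (r-1)\<^sup>2 * (r+1)\<^sup>2"
    unfolding a_eq by (simp add: power2_eq_square algebra_simps)
  ultimately show ?thesis unfolding quad_lin_def r_def by (simp add: divide_le_eq add_pos_nonneg)
qed

definition log_excess :: "real \<Rightarrow> real" where
  "log_excess r = r - 1 - ln r"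

lemma log_excess_nonneg: "0 < r \<Longrightarrow> 0 \<le> log_excess r"
  unfolding log_excess_def using ln_le_minus_one by fastforce

lemma sqrt_dist_le_log_excess:
  fixes a A :: real assumes a: "0 < a" and A: "0 < A"
  shows "(sqrt a - 1)\<^sup>2 \<le> A * (log_excess (a/A) + log_excess (1/A))"
proof -
  define r where "r = sqrt a / A"
  have r: "0 < r" unfolding r_def using a A by simp
  have "A * (log_excess (a/A) + log_excess (1/A)) - (sqrt a - 1)\<^sup>2 = 2 * A * log_excess r"
    unfolding log_excess_def r_def using a A
    by (simp add: ln_div ln_sqrt field_simps power2_eq_square)
  moreover have "0 \<le> 2 * A * log_excess r" using A log_excess_nonneg[OF r] by simp
  ultimately show ?thesis by linarith
qed

lemma one_minus_exp_neg_ge: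
  fixes D :: real assumes "0 \<le> D"
  shows "min D 1 / 2 \<le> 1 - exp (- D)"
proof (cases "D \<le> 1")
  case True
  have "1 + D \<le> exp D" by simp
  hence "exp (-D) \<le> 1/(1+D)" using assms by (simp add: exp_minus field_simps)
  also have "\<dots> \<le> 1 - D/2"
  proof -
    have "D * D \<le> D" using assms True mult_left_mono[of D 1 D] by simp
    hence "1 \<le> (1 - D/2) * (1 + D)" by (simp add: algebra_simps)
    thus ?thesis using assms by (simp add: divide_le_eq)
  qed
  finally show ?thesis using True by simp
next
  case False
  have "exp (-D) \<le> exp (-1)" using False by simp
  also have "exp (-1::real) \<le> 1/2"
    using exp_ge_add_one_self[of 1] by (simp add: exp_minus divide_simps)
  finally show ?thesis using False by simp
qed

context
  fixes a :: "'i::finite \<Rightarrow> real" and \<beta> :: real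
begin

text \<open>The means of \<open>a\<close> padded with \<open>\<beta> - n\<close> ones, \<open>\<beta>\<close> not necessarily an integer;
  \<open>log_gap\<close> is \<open>ln (padded_arith_mean / padded_geom_mean)\<close> when all \<open>a i\<close> are positive.\<close>

definition padded_arith_mean :: real where
  "padded_arith_mean = (sum a UNIV + \<beta> - real CARD('i)) / \<beta>"

definition padded_geom_mean :: real where
  "padded_geom_mean = prod a UNIV powr (1 / \<beta>)"

definition slack :: real where
  "slack = 1 - real CARD('i) / \<beta>"

definition log_gap :: real where
  "log_gap = ln padded_arith_mean - (\<Sum>i\<in>UNIV. ln (a i)) / \<beta>"

context
  assumes a_nonneg: "\<And>i. 0 \<le> a i" and card_le_beta: "real CARD('i) \<le> \<beta>"
begin

lemma beta_ge_one: "1 \<le> \<beta>"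
proof -
  have "1 \<le> real CARD('i)" by simp
  thus ?thesis using card_le_beta by linarith
qed

lemma beta_mult_slack: "\<beta> * slack = \<beta> - real CARD('i)"
  using beta_ge_one by (simp add: slack_def field_simps)

lemma slack_nonneg: "0 \<le> slack"
  using beta_ge_one card_le_beta by (simp add: slack_def)

lemma slack_le_one: "slack \<le> 1"
  using beta_ge_one by (simp add: slack_def)

lemma slack_sq_le_slack: "slack\<^sup>2 \<le> slack"
  using slack_nonneg slack_le_one by (simp add: power2_eq_square mult_left_le)

lemma beta_mult_padded_arith_mean: "\<beta> * padded_arith_mean = sum a UNIV + \<beta> - real CARD('i)"
  using beta_ge_one by (simp add: padded_arith_mean_def)

lemma slack_le_padded_arith_mean: "slack \<le> padded_arith_mean"
  using beta_ge_one a_nonneg by (simp add: padded_arith_mean_def slack_def field_simps sum_nonneg)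

lemma quad_lin_sum_le_gap_if_large:
  assumes "padded_arith_mean / 2 \<le> padded_arith_mean - padded_geom_mean"
  shows "3/64 * slack\<^sup>2 / \<beta> * (\<Sum>i\<in>UNIV. quad_lin (a i - 1))
         \<le> \<beta> * (padded_arith_mean - padded_geom_mean)"
proof -
  define S where "S = sum a UNIV"
  define n where "n = real CARD('i)"
  have S0: "0 \<le> S" unfolding S_def using a_nonneg by (simp add: sum_nonneg)
  have sum_le: "(\<Sum>i\<in>UNIV. quad_lin (a i - 1)) \<le> S + n"
    using sum_mono[of UNIV "\<lambda>i. quad_lin (a i - 1)" "\<lambda>i. a i + 1"]
    unfolding S_def n_def by (simp add: quad_lin_le_add_one a_nonneg sum.distrib)
  have "slack\<^sup>2 * S \<le> \<beta> * S"
    using slack_sq_le_slack slack_le_one beta_ge_one S0 by (intro mult_right_mono) auto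
  moreover have "slack\<^sup>2 * n \<le> \<beta> * (\<beta> - n)"
  proof -
    have "slack\<^sup>2 * n \<le> slack * n"
      using slack_sq_le_slack unfolding n_def by (intro mult_right_mono) auto
    also have "\<dots> \<le> slack * \<beta>"
      using slack_nonneg card_le_beta unfolding n_def by (intro mult_left_mono)
    also have "\<dots> \<le> \<beta> * (\<beta> - n)"
      using beta_mult_slack beta_ge_one card_le_beta unfolding n_def
      by (simp add: mult.commute mult_le_cancel_right1)
    finally show ?thesis .
  qed
  ultimately have "slack\<^sup>2 * (S + n) \<le> \<beta> * (\<beta> * padded_arith_mean)"
    unfolding beta_mult_padded_arith_mean S_def n_def by (simp add: algebra_simps)
  hence "slack\<^sup>2 / \<beta> * (S + n) \<le> \<beta> * padded_arith_mean"
    using beta_ge_one by (simp add: divide_le_eq mult.commute)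
  moreover have "slack\<^sup>2 / \<beta> * (\<Sum>i\<in>UNIV. quad_lin (a i - 1)) \<le> slack\<^sup>2 / \<beta> * (S + n)"
    using sum_le beta_ge_one by (intro mult_left_mono) auto
  moreover have "0 \<le> slack\<^sup>2 / \<beta> * (\<Sum>i\<in>UNIV. quad_lin (a i - 1))"
    using beta_ge_one by (simp add: sum_nonneg quad_lin_nonneg)
  ultimately have "3/64 * (slack\<^sup>2 / \<beta> * (\<Sum>i\<in>UNIV. quad_lin (a i - 1))) \<le> \<beta> * (padded_arith_mean / 2)"
    by linarith
  hence "3/64 * slack\<^sup>2 / \<beta> * (\<Sum>i\<in>UNIV. quad_lin (a i - 1)) \<le> \<beta> * (padded_arith_mean / 2)"
    by simp
  also have "\<dots> \<le> \<beta> * (padded_arith_mean - padded_geom_mean)"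
    using assms beta_ge_one by (intro mult_left_mono) auto
  finally show ?thesis .
qed


context
  assumes a_pos: "\<And>i. 0 < a i"
begin

lemma padded_arith_mean_pos: "0 < padded_arith_mean"
proof -
  have "0 < sum a UNIV" using a_pos by (simp add: sum_pos)
  thus ?thesis using card_le_beta beta_ge_one by (simp add: padded_arith_mean_def)
qed

lemma padded_geom_mean_eq: "padded_geom_mean = padded_arith_mean * exp (- log_gap)"
proof -
  have "ln (prod a UNIV) = (\<Sum>i\<in>UNIV. ln (a i))"
    using a_pos by (intro ln_prod) (auto simp: less_imp_neq[symmetric])
  moreover have "0 < prod a UNIV" using a_pos by (simp add: prod_pos)
  ultimately show ?thesis
    using padded_arith_mean_pos a_pos
    by (simp add: padded_geom_mean_def log_gap_def powr_def exp_diff exp_minus field_simps less_imp_neq[symmetric])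
qed

lemma beta_mult_log_gap:
  "\<beta> * log_gap = (\<beta> - real CARD('i)) * log_excess (1 / padded_arith_mean)
                   + (\<Sum>i\<in>UNIV. log_excess (a i / padded_arith_mean))"
proof -
  let ?A = padded_arith_mean and ?n = "real CARD('i)" and ?S = "sum a UNIV"
  define L where "L = (\<Sum>i\<in>UNIV. ln (a i))"
  have "(\<Sum>i\<in>UNIV. ln (a i / ?A)) = (\<Sum>i\<in>UNIV. ln (a i) - ln ?A)"
    using a_pos padded_arith_mean_pos by (intro sum.cong) (auto simp: ln_div less_imp_neq[symmetric])
  hence P: "(\<Sum>i\<in>UNIV. log_excess (a i / ?A)) = ?S / ?A - ?n - L + ?n * ln ?A"
    by (simp add: log_excess_def L_def sum_subtractf sum_divide_distrib)
  have Q: "log_excess (1 / ?A) = 1 / ?A - 1 + ln ?A"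
    using padded_arith_mean_pos by (simp add: log_excess_def ln_div)
  have R: "(\<beta> - ?n) * (1 / ?A) + ?S / ?A = \<beta>"
    using beta_mult_padded_arith_mean padded_arith_mean_pos by (simp add: field_simps)
  have "\<beta> * log_gap = \<beta> * ln ?A - L"
    using beta_ge_one by (simp add: log_gap_def L_def algebra_simps)
  thus ?thesis unfolding P Q using R by (simp add: algebra_simps)
qed

lemma log_gap_nonneg: "0 \<le> log_gap"
proof -
  have "0 \<le> \<beta> * log_gap"
    unfolding beta_mult_log_gap using card_le_beta a_pos padded_arith_mean_pos
    by (intro add_nonneg_nonneg mult_nonneg_nonneg sum_nonneg log_excess_nonneg) auto
  thus ?thesis using beta_ge_one by (simp add: zero_le_mult_iff)
qed

lemma slack_mult_sqrt_dist_le: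
  "slack * (\<Sum>i\<in>UNIV. (sqrt (a i) - 1)\<^sup>2) \<le> \<beta> * padded_arith_mean * log_gap"
proof -
  let ?A = padded_arith_mean and ?n = "real CARD('i)"
  let ?P = "\<Sum>i\<in>UNIV. log_excess (a i / ?A)" and ?Q = "log_excess (1 / ?A)"
  have P0: "0 \<le> ?P" and Q0: "0 \<le> ?Q"
    using a_pos padded_arith_mean_pos by (auto intro!: sum_nonneg log_excess_nonneg)
  have "slack * (\<Sum>i\<in>UNIV. (sqrt (a i) - 1)\<^sup>2) \<le> slack * (\<Sum>i\<in>UNIV. ?A * (log_excess (a i / ?A) + ?Q))"
    using slack_nonneg a_pos padded_arith_mean_pos
    by (intro mult_left_mono sum_mono sqrt_dist_le_log_excess) auto
  also have "\<dots> = ?A * (slack * ?P + slack * ?n * ?Q)"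
  proof -
    have "(\<Sum>i\<in>UNIV. ?A * (log_excess (a i / ?A) + ?Q)) = ?A * ?P + ?n * (?A * ?Q)"
      by (simp add: distrib_left sum.distrib sum_distrib_left)
    thus ?thesis by (simp add: algebra_simps)
  qed
  also have "\<dots> \<le> ?A * (?P + (\<beta> - ?n) * ?Q)"
  proof -
    have "slack * ?P \<le> ?P" using P0 slack_le_one mult_right_mono[of slack 1 ?P] by simp
    moreover have "slack * ?n \<le> \<beta> - ?n"
      using beta_mult_slack slack_nonneg card_le_beta mult_left_mono[of ?n \<beta> slack]
      by (simp add: mult.commute)
    hence "slack * ?n * ?Q \<le> (\<beta> - ?n) * ?Q" using Q0 by (rule mult_right_mono)
    ultimately show ?thesis using padded_arith_mean_pos by (intro mult_left_mono) auto
  qed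
  also have "?P + (\<beta> - ?n) * ?Q = \<beta> * log_gap"
    using beta_mult_log_gap by simp
  finally show ?thesis by (simp add: mult_ac)
qed

lemma quad_lin_sum_le_gap_if_log_gap_le_1:
  assumes "log_gap \<le> 1"
  shows "3/64 * slack\<^sup>2 / \<beta> * (\<Sum>i\<in>UNIV. quad_lin (a i - 1))
         \<le> \<beta> * (padded_arith_mean - padded_geom_mean)"
proof -
  let ?T = "\<Sum>i\<in>UNIV. (sqrt (a i) - 1)\<^sup>2"
  have T0: "0 \<le> ?T" by (simp add: sum_nonneg)
  have "slack\<^sup>2 / \<beta> \<le> slack"
    using slack_sq_le_slack slack_nonneg beta_ge_one
    by (smt (verit) divide_le_eq mult_le_cancel_left1)
  hence "slack\<^sup>2 / \<beta> * (\<Sum>i\<in>UNIV. quad_lin (a i - 1)) \<le> slack * (4 * ?T)"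
    using a_nonneg beta_ge_one slack_nonneg quad_lin_le_sqrt_dist
    by (intro mult_mono) (auto simp: sum_distrib_left intro!: sum_mono sum_nonneg quad_lin_nonneg)
  moreover have "0 \<le> slack * ?T" using slack_nonneg T0 by simp
  ultimately have "3/64 * (slack\<^sup>2 / \<beta> * (\<Sum>i\<in>UNIV. quad_lin (a i - 1))) \<le> slack * ?T / 2"
    by linarith
  hence "3/64 * slack\<^sup>2 / \<beta> * (\<Sum>i\<in>UNIV. quad_lin (a i - 1)) \<le> slack * ?T / 2"
    by simp
  also have "\<dots> \<le> \<beta> * (padded_arith_mean * log_gap / 2)"
    using slack_mult_sqrt_dist_le by simp
  also have "\<dots> \<le> \<beta> * (padded_arith_mean - padded_geom_mean)"
  proof -
    have "log_gap / 2 \<le> 1 - exp (- log_gap)"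
      using one_minus_exp_neg_ge[OF log_gap_nonneg] assms by simp
    hence "padded_arith_mean * (log_gap / 2) \<le> padded_arith_mean * (1 - exp (- log_gap))"
      using padded_arith_mean_pos by (intro mult_left_mono) auto
    hence "padded_arith_mean * log_gap / 2 \<le> padded_arith_mean - padded_geom_mean"
      unfolding padded_geom_mean_eq by (simp add: algebra_simps)
    thus ?thesis using beta_ge_one by (intro mult_left_mono) auto
  qed
  finally show ?thesis .
qed

end

lemma quad_lin_sum_le_gap:
  "3/64 * slack\<^sup>2 / \<beta> * (\<Sum>i\<in>UNIV. quad_lin (a i - 1))
   \<le> \<beta> * (padded_arith_mean - padded_geom_mean)"
proof (cases "\<exists>i. a i = 0")
  case True
  hence "padded_geom_mean = 0" by (auto simp: padded_geom_mean_def)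
  moreover have "0 \<le> padded_arith_mean" using slack_nonneg slack_le_padded_arith_mean by linarith
  ultimately show ?thesis by (intro quad_lin_sum_le_gap_if_large) simp
next
  case False
  hence pos: "\<And>i. 0 < a i" using a_nonneg by (metis less_eq_real_def)
  show ?thesis
  proof (cases "log_gap \<le> 1")
    case True
    with pos show ?thesis by (rule quad_lin_sum_le_gap_if_log_gap_le_1)
  next
    case False
    have "1 / 2 \<le> 1 - exp (- log_gap)"
      using one_minus_exp_neg_ge[OF log_gap_nonneg[OF pos]] False by simp
    hence "padded_arith_mean * (1/2) \<le> padded_arith_mean * (1 - exp (- log_gap))"
      using padded_arith_mean_pos[OF pos] by (intro mult_left_mono) auto
    hence "padded_arith_mean / 2 \<le> padded_arith_mean - padded_geom_mean"
      unfolding padded_geom_mean_eq[OF pos] by (simp add: algebra_simps)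
    thus ?thesis by (rule quad_lin_sum_le_gap_if_large)
  qed
qed

end

end

lemma padded_am_gm_gap_ge_F_fun:
  fixes a :: "'i::finite \<Rightarrow> real" and \<beta> :: real
  assumes a_nonneg: "\<And>i. 0 \<le> a i" and card_le_beta: "real CARD('i) \<le> \<beta>"
  shows "3 / (64 * \<beta>) * (1 - real CARD('i) / \<beta>)\<^sup>2 * F_fun (sqrt (\<Sum>i\<in>UNIV. (a i - 1)\<^sup>2))
         \<le> \<beta> + (sum a UNIV - real CARD('i)) - \<beta> * prod a UNIV powr (1 / \<beta>)"
proof -
  have beta_pos: "0 < \<beta>" using beta_ge_one[of a \<beta>, OF a_nonneg card_le_beta] by simp
  have "3 / (64 * \<beta>) * (1 - real CARD('i) / \<beta>)\<^sup>2 * F_fun (sqrt (\<Sum>i\<in>UNIV. (a i - 1)\<^sup>2))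
        \<le> 3 / (64 * \<beta>) * (1 - real CARD('i) / \<beta>)\<^sup>2 * (\<Sum>i\<in>UNIV. quad_lin (a i - 1))"
    using F_fun_norm_le_sum_quad_lin[of "\<lambda>i. a i - 1"] beta_pos by (intro mult_left_mono) auto
  also have "\<dots> \<le> \<beta> * ((sum a UNIV + \<beta> - real CARD('i)) / \<beta> - prod a UNIV powr (1 / \<beta>))"
    using quad_lin_sum_le_gap[of a \<beta>, OF a_nonneg card_le_beta]
    unfolding slack_def padded_arith_mean_def padded_geom_mean_def by simp
  also have "\<dots> = \<beta> + (sum a UNIV - real CARD('i)) - \<beta> * prod a UNIV powr (1 / \<beta>)"
    using beta_pos by (simp add: field_simps)
  finally show ?thesis .
qed

theorem lemma3:
  fixes M :: "real^'n^'n" and \<beta> :: real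
  assumes "\<beta> \<ge> real CARD('n)"
    and "psd_matrix M"
  shows "\<beta> + trace (M - mat 1) - \<beta> * (det M) powr (1 / \<beta>)
         \<ge> 3 / (64 * \<beta>) * (1 - real CARD('n) / \<beta>)^2 * F_fun (hs_norm (M - mat 1))"
proof -
  have "transpose M = M" using assms(2) unfolding psd_matrix_def by simp
  then obtain P d where P: "orthogonal_matrix P" and M: "M = P ** diag_mat d ** transpose P"
    by (rule symmetric_matrix_diagonalization)
  have d_nonneg: "0 \<le> d i" for i
    using psd_matrix_orthogonal_conj_diag_nonneg[OF P] assms(2) unfolding M by blast
  have "det M = prod d UNIV"
    unfolding M by (simp add: det_orthogonal_conj[OF P] det_diag_mat)
  moreover have "trace (M - mat 1) = sum d UNIV - real CARD('n)"
    unfolding M by (simp add: trace_sub trace_I trace_orthogonal_conj[OF P] trace_diag_mat)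
  moreover have "hs_norm (M - mat 1) = sqrt (\<Sum>i\<in>UNIV. (d i - 1)\<^sup>2)"
    unfolding M orthogonal_conj_diff_mat_1[OF P] hs_norm_orthogonal_conj[OF P]
    by (simp add: diag_mat_diff_mat_1 hs_norm_diag_mat)
  ultimately show ?thesis
    using padded_am_gm_gap_ge_F_fun[of d \<beta>, OF d_nonneg assms(1)] by simp
qed

end
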